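(* Under the standing setup: (i) if $\delta_B\ge 0$, then $D\in[D_{NM},D^+_{MOB}]$; (ii) if $\delta_B\le 0$, then $D\in[D^-_{MOB},D_{NM}]$; (iii) the bounds in (i) and (ii) are sharp under the respective sign assumption (absent additional information).
   Context: Let $(X,Y,N)$ be a random triple with $X\in\{0,1\}$, $Y$ real-valued, $N$ taking values in a finite set $\mathcal N$. Write $p_n=\Pr(N=n)$, $X_n=\mathbb E[X\mid N=n]$, $Y_n=\mathbb E[Y\mid N=n]$, $X_N=\mathbb E[X\mid N]$, $Y_N=\mathbb E[Y\mid N]$. Assume some $n$ has $p_n>0$ and $X_n\in(0,1)$, and fix reals $\underline Y\le\overline Y$ with $\mathbb E[Y\mid X=x,N=n]\in[\underline Y,\overline Y]$ whenever $\Pr(X=x,N=n)>0$. $D=\mathbb E[Y\mid X=1]-\mathbb E[Y\mid X=0]$; $\delta_B=\mathbb E[\mathrm{Cov}(Y,X\mid N)]$; $D_{NM}=\mathbb E[X_NY_N]/\mathbb E[X_N]-\mathbb E[(1-X_N)Y_N]/\mathbb E[1-X_N]$; $D^+_{MOB}=\big(\mathbb E[\min\{Y_N-\underline Y(1-X_N),\overline Y X_N\}]-\mathbb E[X]\mathbb E[Y]\big)/\mathrm{Var}(X)$, $D^-_{MOB}=\big(\mathbb E[Y](1-\mathbb E[X])-\mathbb E[\min\{Y_N-\underline Y X_N,\overline Y(1-X_N)\}]\big)/\mathrm{Var}(X)$. Sharpness under an assumption $\mathcal A$: the parameter lies in the interval for every joint distribution satisfying the standing assumptions and $\mathcal A$,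 and every value in the interval is attained by some joint distribution of $(X,Y,N)$ with the same observed $(p_n,X_n,Y_n)_n$, satisfying the standing bound and $\mathcal A$. *)

theory Defs
  imports "HOL-Probability.Probability"
begin

definition cexp :: "'a measure \<Rightarrow> ('a \<Rightarrow> real) \<Rightarrow> 'a set \<Rightarrow> real" where
  "cexp M Z A = (\<integral>\<omega>. indicator A \<omega> * Z \<omega> \<partial>M) / measure M A"

definition evN :: "'a measure \<Rightarrow> ('a \<Rightarrow> 'n) \<Rightarrow> 'n \<Rightarrow> 'a set" where
  "evN M N n = {\<omega> \<in> space M. N \<omega> = n}"

definition evXN :: "'a measure \<Rightarrow> ('a \<Rightarrow> real) \<Rightarrow> ('a \<Rightarrow> 'n) \<Rightarrow> real \<Rightarrow> 'n \<Rightarrow> 'a set" where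
  "evXN M X N x n = {\<omega> \<in> space M. X \<omega> = x \<and> N \<omega> = n}"

definition evX :: "'a measure \<Rightarrow> ('a \<Rightarrow> real) \<Rightarrow> real \<Rightarrow> 'a set" where
  "evX M X x = {\<omega> \<in> space M. X \<omega> = x}"

definition pN :: "'a measure \<Rightarrow> ('a \<Rightarrow> 'n) \<Rightarrow> 'n \<Rightarrow> real" where
  "pN M N n = measure M (evN M N n)"

definition condN :: "'a measure \<Rightarrow> ('a \<Rightarrow> 'n) \<Rightarrow> ('a \<Rightarrow> real) \<Rightarrow> 'n \<Rightarrow> real" where
  "condN M N Z n = cexp M Z (evN M N n)"

definition condRV :: "'a measure \<Rightarrow> ('a \<Rightarrow> 'n) \<Rightarrow> ('a \<Rightarrow> real) \<Rightarrow> 'a \<Rightarrow> real" where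
  "condRV M N Z \<omega> = condN M N Z (N \<omega>)"

definition Expect :: "'a measure \<Rightarrow> ('a \<Rightarrow> real) \<Rightarrow> real" where
  "Expect M Z = (\<integral>\<omega>. Z \<omega> \<partial>M)"

definition Var :: "'a measure \<Rightarrow> ('a \<Rightarrow> real) \<Rightarrow> real" where
  "Var M Z = (\<integral>\<omega>. (Z \<omega> - Expect M Z)\<^sup>2 \<partial>M)"

definition standing :: "'a measure \<Rightarrow> ('a \<Rightarrow> real) \<Rightarrow> ('a \<Rightarrow> real) \<Rightarrow> ('a \<Rightarrow> 'n::finite) \<Rightarrow> real \<Rightarrow> real \<Rightarrow> bool" where
  "standing M X Y N Ylo Yhi \<longleftrightarrow>
     prob_space M \<and> X \<in> borel_measurable M \<and> (\<forall>\<omega>\<in>space M. X \<omega> \<in> {0,1}) \<and>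
     integrable M Y \<and> N \<in> measurable M (count_space UNIV) \<and>
     (\<exists>n. pN M N n > 0 \<and> 0 < condN M N X n \<and> condN M N X n < 1) \<and>
     Ylo \<le> Yhi \<and>
     (\<forall>x\<in>{0,1}. \<forall>n. measure M (evXN M X N x n) > 0 \<longrightarrow>
        cexp M Y (evXN M X N x n) \<in> {Ylo..Yhi})"

definition D :: "'a measure \<Rightarrow> ('a \<Rightarrow> real) \<Rightarrow> ('a \<Rightarrow> real) \<Rightarrow> real" where
  "D M X Y = cexp M Y (evX M X 1) - cexp M Y (evX M X 0)"

definition deltaB :: "'a measure \<Rightarrow> ('a \<Rightarrow> real) \<Rightarrow> ('a \<Rightarrow> real) \<Rightarrow> ('a \<Rightarrow> 'n) \<Rightarrow> real" where
  "deltaB M X Y N = Expect M (\<lambda>\<omega>. condRV M N (\<lambda>\<omega>'. X \<omega>' * Y \<omega>') \<omega>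
                              - condRV M N X \<omega> * condRV M N Y \<omega>)"

definition DNM :: "'a measure \<Rightarrow> ('a \<Rightarrow> real) \<Rightarrow> ('a \<Rightarrow> real) \<Rightarrow> ('a \<Rightarrow> 'n) \<Rightarrow> real" where
  "DNM M X Y N =
     Expect M (\<lambda>\<omega>. condRV M N X \<omega> * condRV M N Y \<omega>) / Expect M (condRV M N X)
   - Expect M (\<lambda>\<omega>. (1 - condRV M N X \<omega>) * condRV M N Y \<omega>) / Expect M (\<lambda>\<omega>. 1 - condRV M N X \<omega>)"

definition DMOBp :: "'a measure \<Rightarrow> ('a \<Rightarrow> real) \<Rightarrow> ('a \<Rightarrow> real) \<Rightarrow> ('a \<Rightarrow> 'n) \<Rightarrow> real \<Rightarrow> real \<Rightarrow> real" where
  "DMOBp M X Y N Ylo Yhi =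
     (Expect M (\<lambda>\<omega>. min (condRV M N Y \<omega> - Ylo * (1 - condRV M N X \<omega>)) (Yhi * condRV M N X \<omega>))
      - Expect M X * Expect M Y) / Var M X"

definition DMOBm :: "'a measure \<Rightarrow> ('a \<Rightarrow> real) \<Rightarrow> ('a \<Rightarrow> real) \<Rightarrow> ('a \<Rightarrow> 'n) \<Rightarrow> real \<Rightarrow> real \<Rightarrow> real" where
  "DMOBm M X Y N Ylo Yhi =
     (Expect M Y * (1 - Expect M X)
      - Expect M (\<lambda>\<omega>. min (condRV M N Y \<omega> - Ylo * condRV M N X \<omega>) (Yhi * (1 - condRV M N X \<omega>))))
     / Var M X"

definition same_obs :: "'a measure \<Rightarrow> ('a \<Rightarrow> real) \<Rightarrow> ('a \<Rightarrow> real) \<Rightarrow> ('a \<Rightarrow> 'n) \<Rightarrow>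
                        'b measure \<Rightarrow> ('b \<Rightarrow> real) \<Rightarrow> ('b \<Rightarrow> real) \<Rightarrow> ('b \<Rightarrow> 'n) \<Rightarrow> bool" where
  "same_obs M X Y N M' X' Y' N' \<longleftrightarrow>
     (\<forall>n. pN M' N' n = pN M N n \<and> condN M' N' X' n = condN M N X n \<and> condN M' N' Y' n = condN M N Y n)"

end

theory Submission
  imports Defs
begin

text \<open>
  Write P x n and S x n for the probability and the Y-mass E[Y; X = x, N = n] of the cell
  {X = x, N = n}. As X is binary, D = Cov(X,Y) / Var X; with the observed p_n, X_n, Y_n fixed,
  this is an increasing affine function of E[XY] = \<Sum>n. S 1 n. The same function evaluated
  at E[X_N Y_N] is D_NM, and \<delta>_B = E[XY] - E[X_N Y_N], so the sign of \<delta>_B decides on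
  which side of D_NM the coefficient D lies. Within stratum n the bounds on E[Y | X, N] say
  exactly that S 1 n lies in an interval determined by the observables; its endpoints summed over
  n give the two MOB bounds, and the uncorrelated value P 1 n Y_n also lies in it. Conversely,
  any choice of S 1 n in these intervals is realised by a distribution with one atom per cell,
  which gives sharpness.
\<close>

text \<open>For X with values in {0,1} and mean mx, Var X = mx - mx^2, so ols_slope (E X) (E Y) (E[XY])
  is the regression coefficient Cov(X,Y) / Var X.\<close>

definition ols_slope :: "real \<Rightarrow> real \<Rightarrow> real \<Rightarrow> real" where
  "ols_slope mx my mxy = (mxy - mx * my) / (mx - mx\<^sup>2)"

lemma binary_variance_pos:
  fixes mx :: real
  assumes "0 < mx" "mx < 1"
  shows "0 < mx - mx\<^sup>2"
proof -
  have "mx - mx\<^sup>2 = mx * (1 - mx)"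
    by (simp add: power2_eq_square algebra_simps)
  then show ?thesis
    using assms by simp
qed

lemma ols_slope_mono:
  assumes "0 < mx" "mx < 1" "a \<le> b"
  shows "ols_slope mx my a \<le> ols_slope mx my b"
  unfolding ols_slope_def
  using assms binary_variance_pos[OF assms(1,2)] by (intro divide_right_mono) auto

lemma ols_slope_eq_diff_means:
  assumes "0 < mx" "mx < 1"
  shows "a / mx - (my - a) / (1 - mx) = ols_slope mx my a"
  using assms by (simp add: ols_slope_def power2_eq_square field_simps)

lemma ols_slope_attains:
  assumes "0 < mx" "mx < 1" "d \<in> {ols_slope mx my a .. ols_slope mx my b}"
  shows "\<exists>v \<in> {a..b}. ols_slope mx my v = d"
proof
  have var: "0 < mx - mx\<^sup>2"
    by (rule binary_variance_pos[OF assms(1,2)])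
  show "ols_slope mx my (mx * my + d * (mx - mx\<^sup>2)) = d"
    using var by (simp add: ols_slope_def)
  show "mx * my + d * (mx - mx\<^sup>2) \<in> {a..b}"
    using assms(3) var by (simp add: ols_slope_def pos_le_divide_eq pos_divide_le_eq algebra_simps)
qed

lemma sum_attains_between:
  fixes a b :: "'n \<Rightarrow> real"
  assumes "\<And>n. n \<in> A \<Longrightarrow> a n \<le> b n" "v \<in> {sum a A .. sum b A}"
  shows "\<exists>s. (\<forall>n\<in>A. a n \<le> s n \<and> s n \<le> b n) \<and> sum s A = v"
proof -
  have "v \<in> closed_segment (sum a A) (sum b A)"
    using assms(2) by (simp add: closed_segment_eq_real_ivl)
  then obtain u where u: "0 \<le> u" "u \<le> 1" "v = (1 - u) * sum a A + u * sum b A"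
    by (auto simp: in_segment)
  define s where "s n = a n + u * (b n - a n)" for n
  have "a n \<le> s n \<and> s n \<le> b n" if "n \<in> A" for n
    using assms(1)[OF that] u mult_left_le_one_le[of "b n - a n" u] by (simp add: s_def)
  moreover have "sum s A = v"
    by (simp add: s_def u(3) sum.distrib sum_subtractf sum_distrib_left algebra_simps)
  ultimately show ?thesis
    by blast
qed

text \<open>A stratum with cell probabilities p1, p0 and Y-mass t splits its mass as s on {X = 1} and
  t - s on {X = 0}; the bounds ylo, yhi on the two conditional means of Y become these linear
  constraints.\<close>

definition admissible_split :: "real \<Rightarrow> real \<Rightarrow> real \<Rightarrow> real \<Rightarrow> real \<Rightarrow> real \<Rightarrow> bool" where
  "admissible_split ylo yhi p1 p0 t s \<longleftrightarrow>
     ylo * p1 \<le> s \<and> s \<le> yhi * p1 \<and> ylo * p0 \<le> t - s \<and> t - s \<le> yhi * p0"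

definition split_max :: "real \<Rightarrow> real \<Rightarrow> real \<Rightarrow> real \<Rightarrow> real \<Rightarrow> real" where
  "split_max ylo yhi p1 p0 t = min (t - ylo * p0) (yhi * p1)"

lemma admissible_split_iff:
  "admissible_split ylo yhi p1 p0 t s \<longleftrightarrow>
     t - split_max ylo yhi p0 p1 t \<le> s \<and> s \<le> split_max ylo yhi p1 p0 t"
  by (auto simp: admissible_split_def split_max_def)

lemma admissible_split_between:
  assumes "admissible_split ylo yhi p1 p0 t a" "admissible_split ylo yhi p1 p0 t b"
    and "a \<le> s" "s \<le> b"
  shows "admissible_split ylo yhi p1 p0 t s"
  using assms by (auto simp: admissible_split_def)

lemma admissible_split_max:
  assumes "admissible_split ylo yhi p1 p0 t s"
  shows "admissible_split ylo yhi p1 p0 t (split_max ylo yhi p1 p0 t)"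
  using assms by (auto simp: admissible_split_iff)

lemma admissible_split_min:
  assumes "admissible_split ylo yhi p1 p0 t s"
  shows "admissible_split ylo yhi p1 p0 t (t - split_max ylo yhi p0 p1 t)"
  using assms by (auto simp: admissible_split_iff)

lemma admissible_split_proportional:
  assumes "0 \<le> p1" "0 \<le> p0" "ylo * (p1 + p0) \<le> t" "t \<le> yhi * (p1 + p0)"
  shows "admissible_split ylo yhi p1 p0 t (p1 * t / (p1 + p0))"
proof (cases "p1 + p0 = 0")
  case True
  then have "p1 = 0" "p0 = 0"
    using assms(1,2) by linarith+
  then show ?thesis
    using assms by (simp add: admissible_split_def)
next
  case False
  define r where "r = t / (p1 + p0)"
  have "0 < p1 + p0"
    using assms False by linarith
  then have "ylo \<le> r" "r \<le> yhi"
    using assms by (simp_all add: r_def pos_le_divide_eq pos_divide_le_eq mult.commute)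
  moreover have "p1 * t / (p1 + p0) = p1 * r" "t - p1 * r = p0 * r"
    using False by (simp_all add: r_def field_simps)
  ultimately show ?thesis
    using assms(1,2) by (simp add: admissible_split_def mult_left_mono mult.commute)
qed

text \<open>The hypotheses cover null strata (p1 + p0 = 0), where both sides vanish because
  division by zero yields zero.\<close>

lemma stratum_rescale:
  fixes p1 p0 s t :: real
  assumes "0 \<le> p1" "0 \<le> p0" "p1 + p0 = 0 \<Longrightarrow> s = 0" "p1 + p0 = 0 \<Longrightarrow> t = 0"
  shows "(s / (p1 + p0) - p1 / (p1 + p0) * (t / (p1 + p0))) * (p1 + p0) = s - p1 * t / (p1 + p0)"
    and "p1 / (p1 + p0) * (t / (p1 + p0)) * (p1 + p0) = p1 * t / (p1 + p0)"
    and "p1 / (p1 + p0) * (p1 + p0) = p1"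
    and "(1 - p1 / (p1 + p0)) * (t / (p1 + p0)) * (p1 + p0) = t - p1 * t / (p1 + p0)"
    and "(1 - p1 / (p1 + p0)) * (p1 + p0) = p0"
  using assms by (cases "p1 + p0 = 0"; simp add: add_nonneg_eq_0_iff field_simps power2_eq_square)+

lemma split_max_rescale:
  fixes p1 p0 t :: real
  assumes "0 \<le> p1" "0 \<le> p0" "p1 + p0 = 0 \<Longrightarrow> t = 0"
  shows "min (t / (p1 + p0) - ylo * (1 - p1 / (p1 + p0))) (yhi * (p1 / (p1 + p0))) * (p1 + p0)
           = split_max ylo yhi p1 p0 t" (is ?max1)
    and "min (t / (p1 + p0) - ylo * (p1 / (p1 + p0))) (yhi * (1 - p1 / (p1 + p0))) * (p1 + p0)
           = split_max ylo yhi p0 p1 t" (is ?max0)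
proof -
  have null: "p1 = 0" "p0 = 0" "t = 0" if "p1 + p0 = 0"
    using assms that by linarith+
  have complement: "1 - p1 / (p1 + p0) = p0 / (p1 + p0)" if "0 < p1 + p0"
    using that by (simp add: field_simps)
  have scale: "min (t / (p1 + p0) - ylo * (q / (p1 + p0))) (yhi * (r / (p1 + p0))) * (p1 + p0)
      = min (t - ylo * q) (yhi * r)" if "0 < p1 + p0" for q r
  proof -
    have "t / (p1 + p0) - ylo * (q / (p1 + p0)) = (t - ylo * q) / (p1 + p0)"
      "yhi * (r / (p1 + p0)) = yhi * r / (p1 + p0)"
      by (simp_all add: diff_divide_distrib)
    then show ?thesis
      using that by (simp add: min_mult_distrib_right)
  qed
  have pos: "0 < p1 + p0" if "p1 + p0 \<noteq> 0"
    using assms that by linarith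
  show ?max1
  proof (cases "p1 + p0 = 0")
    case True
    then show ?thesis
      using null[OF True] by (simp add: split_max_def)
  next
    case False
    show ?thesis
      unfolding complement[OF pos[OF False]] scale[OF pos[OF False]] split_max_def by (rule refl)
  qed
  show ?max0
  proof (cases "p1 + p0 = 0")
    case True
    then show ?thesis
      using null[OF True] by (simp add: split_max_def)
  next
    case False
    show ?thesis
      unfolding complement[OF pos[OF False]] scale[OF pos[OF False]] split_max_def by (rule refl)
  qed
qed

definition cell_prob :: "'a measure \<Rightarrow> ('a \<Rightarrow> real) \<Rightarrow> ('a \<Rightarrow> 'n) \<Rightarrow> real \<Rightarrow> 'n \<Rightarrow> real" where
  "cell_prob M X N x n = measure M (evXN M X N x n)"

definition cell_integral ::
  "'a measure \<Rightarrow> ('a \<Rightarrow> real) \<Rightarrow> ('a \<Rightarrow> real) \<Rightarrow> ('a \<Rightarrow> 'n) \<Rightarrow> real \<Rightarrow> 'n \<Rightarrow> real" where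
  "cell_integral M X Y N x n = (\<integral>\<omega>. indicator (evXN M X N x n) \<omega> * Y \<omega> \<partial>M)"

locale binary_triple = prob_space M for M :: "'a measure" +
  fixes X Y :: "'a \<Rightarrow> real" and N :: "'a \<Rightarrow> 'n::finite"
  assumes measurable_X[measurable]: "X \<in> borel_measurable M"
    and X_binary: "\<And>\<omega>. \<omega> \<in> space M \<Longrightarrow> X \<omega> = 0 \<or> X \<omega> = 1"
    and integrable_Y: "integrable M Y"
    and measurable_N[measurable]: "N \<in> measurable M (count_space UNIV)"
begin

abbreviation "P \<equiv> cell_prob M X N"
abbreviation "S \<equiv> cell_integral M X Y N"
abbreviation PN where "PN n \<equiv> P 1 n + P 0 n"
abbreviation SN where "SN n \<equiv> S 1 n + S 0 n"
abbreviation mean_X where "mean_X \<equiv> \<Sum>n\<in>UNIV. P 1 n"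
abbreviation mean_Y where "mean_Y \<equiv> \<Sum>n\<in>UNIV. SN n"
abbreviation S_uncorr where "S_uncorr n \<equiv> P 1 n * SN n / PN n"

text \<open>S_uncorr n is the value of S 1 n if X and Y were uncorrelated within stratum n; its sum
  over n is E[X_N Y_N].\<close>

lemma sets_evXN[measurable]: "evXN M X N x n \<in> sets M"
  unfolding evXN_def by measurable

lemma integral_cells:
  fixes f :: "real \<Rightarrow> 'n \<Rightarrow> real"
  assumes Z: "integrable M Z" and g: "\<And>\<omega>. \<omega> \<in> space M \<Longrightarrow> g \<omega> = f (X \<omega>) (N \<omega>) * Z \<omega>"
  shows "(\<integral>\<omega>. g \<omega> \<partial>M) = (\<Sum>n\<in>UNIV. f 1 n * (\<integral>\<omega>. indicator (evXN M X N 1 n) \<omega> * Z \<omega> \<partial>M)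
                                   + f 0 n * (\<integral>\<omega>. indicator (evXN M X N 0 n) \<omega> * Z \<omega> \<partial>M))"
    (is "_ = ?rhs")
proof -
  have cell: "integrable M (\<lambda>\<omega>. indicator (evXN M X N x n) \<omega> * Z \<omega>)" for x n
    using integrable_real_mult_indicator[OF sets_evXN Z] by (simp add: mult.commute)
  have indicator_cell: "indicator (evXN M X N x n) \<omega> = of_bool (X \<omega> = x \<and> N \<omega> = n)"
    if "\<omega> \<in> space M" for \<omega> x n
    using that by (simp add: evXN_def indicator_def)
  have "g \<omega> = (\<Sum>n\<in>UNIV. f 1 n * (indicator (evXN M X N 1 n) \<omega> * Z \<omega>)
                        + f 0 n * (indicator (evXN M X N 0 n) \<omega> * Z \<omega>))"
    if "\<omega> \<in> space M" for \<omega>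
    using X_binary[OF that]
    by (auto simp: g[OF that] indicator_cell[OF that] sum.distrib mult.left_commute[of _ "of_bool _"])
  then have "(\<integral>\<omega>. g \<omega> \<partial>M) = (\<integral>\<omega>. (\<Sum>n\<in>UNIV. f 1 n * (indicator (evXN M X N 1 n) \<omega> * Z \<omega>)
                        + f 0 n * (indicator (evXN M X N 0 n) \<omega> * Z \<omega>)) \<partial>M)"
    by (rule Bochner_Integration.integral_cong[OF refl])
  also have "\<dots> = ?rhs"
    using cell by (simp add: Bochner_Integration.integral_sum Bochner_Integration.integral_add)
  finally show ?thesis .
qed

lemma integral_cells_prob:
  assumes "\<And>\<omega>. \<omega> \<in> space M \<Longrightarrow> g \<omega> = f (X \<omega>) (N \<omega>)"
  shows "(\<integral>\<omega>. g \<omega> \<partial>M) = (\<Sum>n\<in>UNIV. f 1 n * P 1 n + f 0 n * P 0 n)"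
  using integral_cells[of "\<lambda>_. 1" g f] assms by (simp add: cell_prob_def)

lemma integral_cells_Y:
  assumes "\<And>\<omega>. \<omega> \<in> space M \<Longrightarrow> g \<omega> = f (X \<omega>) (N \<omega>) * Y \<omega>"
  shows "(\<integral>\<omega>. g \<omega> \<partial>M) = (\<Sum>n\<in>UNIV. f 1 n * S 1 n + f 0 n * S 0 n)"
  using integral_cells[OF integrable_Y assms] by (simp add: cell_integral_def)

lemma cell_prob_nonneg: "0 \<le> P x n"
  by (simp add: cell_prob_def)

lemma cell_integral_null:
  assumes "P x n = 0"
  shows "S x n = 0"
proof -
  have "evXN M X N x n \<in> null_sets M"
    using assms by (simp add: cell_prob_def emeasure_eq_measure null_sets_def)
  then have "AE \<omega> in M. indicator (evXN M X N x n) \<omega> * Y \<omega> = 0"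
    by (auto dest!: AE_not_in simp: indicator_def)
  then show ?thesis
    by (simp add: cell_integral_def integral_eq_zero_AE)
qed

lemma null_stratum:
  assumes "PN n = 0"
  shows "S 1 n = 0" "SN n = 0"
  using assms cell_prob_nonneg[of 1 n] cell_prob_nonneg[of 0 n] cell_integral_null
  by (auto simp: add_nonneg_eq_0_iff)

lemma sum_PN: "(\<Sum>n\<in>UNIV. PN n) = 1"
  using integral_cells_prob[of "\<lambda>_. 1" "\<lambda>_ _. 1"] by (simp add: prob_space)

lemma sum_P0: "(\<Sum>n\<in>UNIV. P 0 n) = 1 - mean_X"
  using sum_PN by (simp add: sum.distrib)

lemma pN_eq: "pN M N n = PN n"
proof -
  have "pN M N n = (\<integral>\<omega>. indicator (evN M N n) \<omega> \<partial>M)"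
    by (simp add: pN_def evN_def)
  also have "\<dots> = PN n"
    by (subst integral_cells_prob[where f="\<lambda>_ m. of_bool (m = n)"]) (auto simp: evN_def sum.distrib)
  finally show ?thesis .
qed

lemma condN_X: "condN M N X n = P 1 n / PN n"
proof -
  have "(\<integral>\<omega>. indicator (evN M N n) \<omega> * X \<omega> \<partial>M) = P 1 n"
    by (subst integral_cells_prob[where f="\<lambda>x m. of_bool (m = n) * x"]) (auto simp: evN_def)
  then show ?thesis
    by (simp add: condN_def cexp_def pN_eq[unfolded pN_def])
qed

lemma condN_Y: "condN M N Y n = SN n / PN n"
proof -
  have "(\<integral>\<omega>. indicator (evN M N n) \<omega> * Y \<omega> \<partial>M) = SN n"
    by (subst integral_cells_Y[where f="\<lambda>_ m. of_bool (m = n)"]) (auto simp: evN_def sum.distrib)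
  then show ?thesis
    by (simp add: condN_def cexp_def pN_eq[unfolded pN_def])
qed

lemma condN_XY: "condN M N (\<lambda>\<omega>. X \<omega> * Y \<omega>) n = S 1 n / PN n"
proof -
  have "(\<integral>\<omega>. indicator (evN M N n) \<omega> * (X \<omega> * Y \<omega>) \<partial>M) = S 1 n"
    by (subst integral_cells_Y[where f="\<lambda>x m. of_bool (m = n) * x"]) (auto simp: evN_def)
  then show ?thesis
    by (simp add: condN_def cexp_def pN_eq[unfolded pN_def])
qed

lemma Expect_fun_N: "Expect M (\<lambda>\<omega>. h (N \<omega>)) = (\<Sum>n\<in>UNIV. h n * PN n)"
  unfolding Expect_def
  by (subst integral_cells_prob[where f="\<lambda>_ m. h m"]) (auto simp: algebra_simps)

lemma Expect_X: "Expect M X = mean_X"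
  unfolding Expect_def by (subst integral_cells_prob[where f="\<lambda>x _. x"]) auto

lemma Expect_Y: "Expect M Y = mean_Y"
  unfolding Expect_def by (subst integral_cells_Y[where f="\<lambda>_ _. 1"]) auto

lemma Var_X: "Var M X = mean_X - mean_X\<^sup>2"
proof -
  have "Var M X = (\<Sum>n\<in>UNIV. (1 - mean_X)\<^sup>2 * P 1 n + mean_X\<^sup>2 * P 0 n)"
    unfolding Var_def Expect_X
    by (subst integral_cells_prob[where f="\<lambda>x _. (x - mean_X)\<^sup>2"]) auto
  also have "\<dots> = (1 - mean_X)\<^sup>2 * mean_X + mean_X\<^sup>2 * (1 - mean_X)"
    by (simp add: sum.distrib sum_distrib_left[symmetric] sum_P0)
  finally show ?thesis
    by (simp add: power2_eq_square algebra_simps)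
qed

lemma cell_mean_in_bounds_iff:
  "(0 < P x n \<longrightarrow> S x n / P x n \<in> {ylo..yhi}) \<longleftrightarrow> ylo * P x n \<le> S x n \<and> S x n \<le> yhi * P x n"
proof (cases "P x n = 0")
  case True
  then show ?thesis
    by (simp add: cell_integral_null)
next
  case False
  then have "0 < P x n"
    using cell_prob_nonneg[of x n] by linarith
  then show ?thesis
    by (simp add: pos_le_divide_eq pos_divide_le_eq mult.commute)
qed

lemma mixed_stratum_iff:
  "(0 < pN M N n \<and> 0 < condN M N X n \<and> condN M N X n < 1) \<longleftrightarrow> 0 < P 1 n \<and> 0 < P 0 n"
  using cell_prob_nonneg[of 1 n] cell_prob_nonneg[of 0 n]
  by (auto simp: pN_eq condN_X zero_less_divide_iff divide_less_eq)

lemma standing_iff: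
  "standing M X Y N ylo yhi \<longleftrightarrow>
     (\<exists>n. 0 < P 1 n \<and> 0 < P 0 n) \<and> ylo \<le> yhi \<and>
     (\<forall>n. admissible_split ylo yhi (P 1 n) (P 0 n) (SN n) (S 1 n))"
proof -
  have "(\<forall>x\<in>{0,1}. \<forall>n. 0 < measure M (evXN M X N x n) \<longrightarrow> cexp M Y (evXN M X N x n) \<in> {ylo..yhi})
      \<longleftrightarrow> (\<forall>n. admissible_split ylo yhi (P 1 n) (P 0 n) (SN n) (S 1 n))"
    using cell_mean_in_bounds_iff
    by (simp add: admissible_split_def cexp_def cell_prob_def[symmetric] cell_integral_def[symmetric])
      blast
  then show ?thesis
    using prob_space_axioms X_binary integrable_Y mixed_stratum_iff by (simp add: standing_def)
qed

lemma mean_X_strictly_between: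
  assumes "standing M X Y N ylo yhi"
  shows "0 < mean_X" "mean_X < 1"
proof -
  obtain n where n: "0 < P 1 n" "0 < P 0 n"
    using assms standing_iff by blast
  have "P 1 n \<le> mean_X" "P 0 n \<le> (\<Sum>n\<in>UNIV. P 0 n)"
    by (simp_all add: member_le_sum cell_prob_nonneg)
  then show "0 < mean_X" "mean_X < 1"
    using n sum_P0 by linarith+
qed

lemma D_eq_ols_slope:
  assumes "0 < mean_X" "mean_X < 1"
  shows "D M X Y = ols_slope mean_X mean_Y (\<Sum>n\<in>UNIV. S 1 n)"
proof -
  have Y: "(\<integral>\<omega>. indicator (evX M X x) \<omega> * Y \<omega> \<partial>M)
      = (\<Sum>n\<in>UNIV. of_bool (1 = x) * S 1 n + of_bool (0 = x) * S 0 n)" for x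
    by (rule integral_cells_Y) (simp add: evX_def)
  have P: "measure M (evX M X x) = (\<Sum>n\<in>UNIV. of_bool (1 = x) * P 1 n + of_bool (0 = x) * P 0 n)"
    for x
  proof -
    have "measure M (evX M X x) = (\<integral>\<omega>. indicator (evX M X x) \<omega> \<partial>M)"
      by (simp add: evX_def)
    also have "\<dots> = (\<Sum>n\<in>UNIV. of_bool (1 = x) * P 1 n + of_bool (0 = x) * P 0 n)"
      by (rule integral_cells_prob) (simp add: evX_def)
    finally show ?thesis .
  qed
  have "(\<Sum>n\<in>UNIV. S 0 n) = mean_Y - (\<Sum>n\<in>UNIV. S 1 n)"
    by (simp add: sum.distrib)
  then show ?thesis
    using Y[of 1] Y[of 0] P[of 1] P[of 0] ols_slope_eq_diff_means[OF assms, of _ mean_Y]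
    by (simp add: D_def cexp_def sum_P0)
qed

lemma deltaB_eq: "deltaB M X Y N = (\<Sum>n\<in>UNIV. S 1 n) - (\<Sum>n\<in>UNIV. S_uncorr n)"
proof -
  have "deltaB M X Y N = (\<Sum>n\<in>UNIV. (S 1 n / PN n - P 1 n / PN n * (SN n / PN n)) * PN n)"
    unfolding deltaB_def condRV_def condN_XY condN_X condN_Y by (rule Expect_fun_N)
  then show ?thesis
    by (simp only: stratum_rescale[OF cell_prob_nonneg cell_prob_nonneg null_stratum] sum_subtractf)
qed

lemma DNM_eq_ols_slope:
  assumes "0 < mean_X" "mean_X < 1"
  shows "DNM M X Y N = ols_slope mean_X mean_Y (\<Sum>n\<in>UNIV. S_uncorr n)"
proof -
  note rescale = stratum_rescale[OF cell_prob_nonneg cell_prob_nonneg null_stratum]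
  have "Expect M (\<lambda>\<omega>. condRV M N X \<omega> * condRV M N Y \<omega>) = (\<Sum>n\<in>UNIV. S_uncorr n)"
    "Expect M (condRV M N X) = mean_X"
    "Expect M (\<lambda>\<omega>. (1 - condRV M N X \<omega>) * condRV M N Y \<omega>) = mean_Y - (\<Sum>n\<in>UNIV. S_uncorr n)"
    "Expect M (\<lambda>\<omega>. 1 - condRV M N X \<omega>) = 1 - mean_X"
    unfolding condRV_def condN_X condN_Y
    by (subst Expect_fun_N; simp only: rescale sum_subtractf sum_P0)+
  then show ?thesis
    unfolding DNM_def by (simp add: ols_slope_eq_diff_means[OF assms])
qed

lemma DMOBp_eq_ols_slope:
  "DMOBp M X Y N ylo yhi
     = ols_slope mean_X mean_Y (\<Sum>n\<in>UNIV. split_max ylo yhi (P 1 n) (P 0 n) (SN n))"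
  unfolding DMOBp_def condRV_def condN_X condN_Y Var_X Expect_X Expect_Y ols_slope_def
  by (subst Expect_fun_N)
    (simp only: split_max_rescale[OF cell_prob_nonneg cell_prob_nonneg null_stratum(2)])

lemma DMOBm_eq_ols_slope:
  "DMOBm M X Y N ylo yhi
     = ols_slope mean_X mean_Y (\<Sum>n\<in>UNIV. SN n - split_max ylo yhi (P 0 n) (P 1 n) (SN n))"
  unfolding DMOBm_def condRV_def condN_X condN_Y Var_X Expect_X Expect_Y ols_slope_def
  by (subst Expect_fun_N)
    (simp only: split_max_rescale[OF cell_prob_nonneg cell_prob_nonneg null_stratum(2)],
      simp add: sum_subtractf algebra_simps)

lemma admissible_splits:
  assumes "standing M X Y N ylo yhi"
  shows "admissible_split ylo yhi (P 1 n) (P 0 n) (SN n) (S 1 n)"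
    and "admissible_split ylo yhi (P 1 n) (P 0 n) (SN n) (S_uncorr n)"
    and "admissible_split ylo yhi (P 1 n) (P 0 n) (SN n) (split_max ylo yhi (P 1 n) (P 0 n) (SN n))"
    and "admissible_split ylo yhi (P 1 n) (P 0 n) (SN n) (SN n - split_max ylo yhi (P 0 n) (P 1 n) (SN n))"
proof -
  show S1: "admissible_split ylo yhi (P 1 n) (P 0 n) (SN n) (S 1 n)"
    using assms standing_iff by blast
  then have "ylo * PN n \<le> SN n" "SN n \<le> yhi * PN n"
    by (auto simp: admissible_split_def algebra_simps)
  then show "admissible_split ylo yhi (P 1 n) (P 0 n) (SN n) (S_uncorr n)"
    by (intro admissible_split_proportional cell_prob_nonneg)
  show "admissible_split ylo yhi (P 1 n) (P 0 n) (SN n) (split_max ylo yhi (P 1 n) (P 0 n) (SN n))"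
    using S1 by (rule admissible_split_max)
  show "admissible_split ylo yhi (P 1 n) (P 0 n) (SN n) (SN n - split_max ylo yhi (P 0 n) (P 1 n) (SN n))"
    using S1 by (rule admissible_split_min)
qed

lemma D_bounds:
  assumes "standing M X Y N ylo yhi"
  shows "0 \<le> deltaB M X Y N \<Longrightarrow> D M X Y \<in> {DNM M X Y N .. DMOBp M X Y N ylo yhi}"
    and "deltaB M X Y N \<le> 0 \<Longrightarrow> D M X Y \<in> {DMOBm M X Y N ylo yhi .. DNM M X Y N}"
proof -
  note mean = mean_X_strictly_between[OF assms]
  have "(\<Sum>n\<in>UNIV. S 1 n) \<le> (\<Sum>n\<in>UNIV. split_max ylo yhi (P 1 n) (P 0 n) (SN n))"
    "(\<Sum>n\<in>UNIV. SN n - split_max ylo yhi (P 0 n) (P 1 n) (SN n)) \<le> (\<Sum>n\<in>UNIV. S 1 n)"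
    using admissible_splits(1)[OF assms] by (auto intro!: sum_mono simp: admissible_split_iff)
  then show "0 \<le> deltaB M X Y N \<Longrightarrow> D M X Y \<in> {DNM M X Y N .. DMOBp M X Y N ylo yhi}"
    and "deltaB M X Y N \<le> 0 \<Longrightarrow> D M X Y \<in> {DMOBm M X Y N ylo yhi .. DNM M X Y N}"
    unfolding deltaB_eq D_eq_ols_slope[OF mean] DNM_eq_ols_slope[OF mean]
      DMOBp_eq_ols_slope DMOBm_eq_ols_slope
    by (auto intro: ols_slope_mono[OF mean])
qed

end

text \<open>The distribution with mass p1 n at the point (1, y1 n, n) and mass p0 n at (0, y0 n, n).\<close>

definition atom_weight :: "('n \<Rightarrow> real) \<Rightarrow> ('n \<Rightarrow> real) \<Rightarrow> 'n \<times> bool \<Rightarrow> real" where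
  "atom_weight p1 p0 = (\<lambda>(n, b). if b then p1 n else p0 n)"

definition atom :: "('n \<Rightarrow> real) \<Rightarrow> ('n \<Rightarrow> real) \<Rightarrow> 'n \<times> bool \<Rightarrow> real \<times> real \<times> 'n" where
  "atom y1 y0 = (\<lambda>(n, b). if b then (1, y1 n, n) else (0, y0 n, n))"

definition stratified_atoms ::
  "('n \<Rightarrow> real) \<Rightarrow> ('n \<Rightarrow> real) \<Rightarrow> ('n \<Rightarrow> real) \<Rightarrow> ('n \<Rightarrow> real) \<Rightarrow> (real \<times> real \<times> 'n) measure"
  where "stratified_atoms p1 p0 y1 y0 =
    distr (measure_pmf (embed_pmf (atom_weight p1 p0))) (count_space (range (atom y1 y0))) (atom y1 y0)"

lemma sum_UNIV_prod_bool:
  fixes h :: "'n::finite \<times> bool \<Rightarrow> 'b::comm_monoid_add"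
  shows "(\<Sum>x\<in>UNIV. h x) = (\<Sum>n\<in>UNIV. h (n, True) + h (n, False))"
proof -
  have "(\<Sum>x\<in>UNIV. h x) = (\<Sum>n\<in>UNIV. \<Sum>b\<in>UNIV. h (n, b))"
    by (simp add: sum.cartesian_product)
  then show ?thesis
    by (simp add: UNIV_bool add.commute)
qed

context
  fixes p1 p0 y1 y0 :: "'n::finite \<Rightarrow> real"
  assumes nonneg: "\<And>n. 0 \<le> p1 n" "\<And>n. 0 \<le> p0 n"
    and total: "(\<Sum>n\<in>UNIV. p1 n + p0 n) = 1"
begin

lemma pmf_atom_weight: "pmf (embed_pmf (atom_weight p1 p0)) x = atom_weight p1 p0 x"
proof (rule pmf_embed_pmf)
  show "0 \<le> atom_weight p1 p0 x" for x
    using nonneg by (auto simp: atom_weight_def split: prod.split)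
  moreover have "(\<Sum>x\<in>UNIV. atom_weight p1 p0 x) = 1"
    using total by (simp add: sum_UNIV_prod_bool atom_weight_def)
  ultimately show "(\<integral>\<^sup>+x. atom_weight p1 p0 x \<partial>count_space UNIV) = 1"
    by (simp add: nn_integral_count_space_finite)
qed

lemma measurable_atom:
  "atom y1 y0 \<in> measurable (measure_pmf (embed_pmf (atom_weight p1 p0))) (count_space (range (atom y1 y0)))"
  by simp

lemma integral_stratified_atoms:
  "(\<integral>\<omega>. h \<omega> \<partial>stratified_atoms p1 p0 y1 y0)
     = (\<Sum>n\<in>UNIV. h (1, y1 n, n) * p1 n + h (0, y0 n, n) * p0 n)"
proof -
  have "(\<integral>\<omega>. h \<omega> \<partial>stratified_atoms p1 p0 y1 y0)
      = (\<integral>x. h (atom y1 y0 x) \<partial>measure_pmf (embed_pmf (atom_weight p1 p0)))"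
    unfolding stratified_atoms_def by (rule integral_distr[OF measurable_atom]) simp
  also have "\<dots> = (\<Sum>x\<in>UNIV. h (atom y1 y0 x) * pmf (embed_pmf (atom_weight p1 p0)) x)"
    by (rule integral_measure_pmf_real) auto
  also have "\<dots> = (\<Sum>n\<in>UNIV. h (1, y1 n, n) * p1 n + h (0, y0 n, n) * p0 n)"
    unfolding pmf_atom_weight sum_UNIV_prod_bool by (simp add: atom_weight_def atom_def)
  finally show ?thesis .
qed

lemma binary_triple_stratified_atoms:
  "binary_triple (stratified_atoms p1 p0 y1 y0) fst (fst \<circ> snd) (snd \<circ> snd)"
  unfolding binary_triple_def binary_triple_axioms_def
proof (intro conjI allI impI)
  show "prob_space (stratified_atoms p1 p0 y1 y0)"
    unfolding stratified_atoms_def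
    by (rule prob_space.prob_space_distr[OF prob_space_measure_pmf measurable_atom])
  show "fst \<omega> = 0 \<or> fst \<omega> = 1" if "\<omega> \<in> space (stratified_atoms p1 p0 y1 y0)" for \<omega>
    using that by (auto simp: stratified_atoms_def atom_def split: if_splits)
  show "integrable (stratified_atoms p1 p0 y1 y0) (fst \<circ> snd)"
    unfolding stratified_atoms_def
    by (subst integrable_distr_eq[OF measurable_atom]) (auto intro: integrable_measure_pmf_finite)
qed (simp_all add: stratified_atoms_def)

lemma cells_stratified_atoms:
  "cell_prob (stratified_atoms p1 p0 y1 y0) fst (snd \<circ> snd) 1 n = p1 n"
  "cell_prob (stratified_atoms p1 p0 y1 y0) fst (snd \<circ> snd) 0 n = p0 n"
  "cell_integral (stratified_atoms p1 p0 y1 y0) fst (fst \<circ> snd) (snd \<circ> snd) 1 n = y1 n * p1 n"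
  "cell_integral (stratified_atoms p1 p0 y1 y0) fst (fst \<circ> snd) (snd \<circ> snd) 0 n = y0 n * p0 n"
proof -
  let ?M = "stratified_atoms p1 p0 y1 y0"
  have indicator_cell:
    "indicator (evXN ?M fst (snd \<circ> snd) x n) \<omega> = of_bool (fst \<omega> = x \<and> snd (snd \<omega>) = n)"
    if "\<omega> \<in> range (atom y1 y0)" for \<omega> x
    using that by (simp add: evXN_def stratified_atoms_def indicator_def)
  have in_range: "(1, y1 m, m) \<in> range (atom y1 y0)" "(0, y0 m, m) \<in> range (atom y1 y0)" for m
    by (auto simp: atom_def image_iff intro: bexI[of _ "(m, True)"] bexI[of _ "(m, False)"])
  have "cell_prob ?M fst (snd \<circ> snd) x n
      = (\<integral>\<omega>. indicator (evXN ?M fst (snd \<circ> snd) x n) \<omega> \<partial>?M)" for x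
    using Int_absorb2[of "evXN ?M fst (snd \<circ> snd) x n" "space ?M"] by (simp add: cell_prob_def evXN_def)
  then show "cell_prob ?M fst (snd \<circ> snd) 1 n = p1 n" "cell_prob ?M fst (snd \<circ> snd) 0 n = p0 n"
    unfolding integral_stratified_atoms by (simp_all add: indicator_cell in_range)
  show "cell_integral ?M fst (fst \<circ> snd) (snd \<circ> snd) 1 n = y1 n * p1 n"
    "cell_integral ?M fst (fst \<circ> snd) (snd \<circ> snd) 0 n = y0 n * p0 n"
    by (simp_all add: cell_integral_def integral_stratified_atoms indicator_cell in_range mult.assoc)
qed

end

context binary_triple
begin

lemma admissible_split_realizable:
  assumes standing: "standing M X Y N ylo yhi"
    and admissible: "\<And>n. admissible_split ylo yhi (P 1 n) (P 0 n) (SN n) (s n)"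
  shows "\<exists>M' :: (real \<times> real \<times> 'n) measure.
           standing M' fst (fst \<circ> snd) (snd \<circ> snd) ylo yhi
           \<and> same_obs M X Y N M' fst (fst \<circ> snd) (snd \<circ> snd)
           \<and> deltaB M' fst (fst \<circ> snd) (snd \<circ> snd) = (\<Sum>n\<in>UNIV. s n) - (\<Sum>n\<in>UNIV. S_uncorr n)
           \<and> D M' fst (fst \<circ> snd) = ols_slope mean_X mean_Y (\<Sum>n\<in>UNIV. s n)"
proof -
  define M' where "M' = stratified_atoms (P 1) (P 0) (\<lambda>n. s n / P 1 n) (\<lambda>n. (SN n - s n) / P 0 n)"
  interpret M': binary_triple M' fst "fst \<circ> snd" "snd \<circ> snd"
    unfolding M'_def by (rule binary_triple_stratified_atoms[OF cell_prob_nonneg cell_prob_nonneg sum_PN])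
  have "s n / P 1 n * P 1 n = s n" "(SN n - s n) / P 0 n * P 0 n = SN n - s n" for n
    using admissible[of n] by (auto simp: admissible_split_def)
  then have cells: "M'.P 1 n = P 1 n" "M'.P 0 n = P 0 n" "M'.S 1 n = s n" "M'.S 0 n = SN n - s n" for n
    unfolding M'_def by (simp_all add: cells_stratified_atoms[OF cell_prob_nonneg cell_prob_nonneg sum_PN])
  show ?thesis
  proof (intro exI conjI)
    show "standing M' fst (fst \<circ> snd) (snd \<circ> snd) ylo yhi"
      using standing admissible by (simp add: M'.standing_iff standing_iff cells)
    show "same_obs M X Y N M' fst (fst \<circ> snd) (snd \<circ> snd)"
      by (simp add: same_obs_def M'.pN_eq M'.condN_X M'.condN_Y pN_eq condN_X condN_Y cells)
    show "deltaB M' fst (fst \<circ> snd) (snd \<circ> snd) = (\<Sum>n\<in>UNIV. s n) - (\<Sum>n\<in>UNIV. S_uncorr n)"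
      by (simp add: M'.deltaB_eq cells)
    show "D M' fst (fst \<circ> snd) = ols_slope mean_X mean_Y (\<Sum>n\<in>UNIV. s n)"
      using M'.D_eq_ols_slope mean_X_strictly_between[OF standing] by (simp add: cells)
  qed
qed

lemma D_attains_between:
  assumes standing: "standing M X Y N ylo yhi"
    and lower: "\<And>n. admissible_split ylo yhi (P 1 n) (P 0 n) (SN n) (a n)"
    and upper: "\<And>n. admissible_split ylo yhi (P 1 n) (P 0 n) (SN n) (b n)"
    and le: "\<And>n. a n \<le> b n"
    and d: "d \<in> {ols_slope mean_X mean_Y (\<Sum>n\<in>UNIV. a n) .. ols_slope mean_X mean_Y (\<Sum>n\<in>UNIV. b n)}"
  shows "\<exists>M' :: (real \<times> real \<times> 'n) measure.
           standing M' fst (fst \<circ> snd) (snd \<circ> snd) ylo yhi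
           \<and> same_obs M X Y N M' fst (fst \<circ> snd) (snd \<circ> snd)
           \<and> deltaB M' fst (fst \<circ> snd) (snd \<circ> snd)
               \<in> {(\<Sum>n\<in>UNIV. a n) - (\<Sum>n\<in>UNIV. S_uncorr n) .. (\<Sum>n\<in>UNIV. b n) - (\<Sum>n\<in>UNIV. S_uncorr n)}
           \<and> D M' fst (fst \<circ> snd) = d"
proof -
  obtain v where v: "v \<in> {(\<Sum>n\<in>UNIV. a n) .. (\<Sum>n\<in>UNIV. b n)}" "ols_slope mean_X mean_Y v = d"
    using ols_slope_attains[OF mean_X_strictly_between[OF standing] d] by blast
  obtain s where s: "\<And>n. a n \<le> s n \<and> s n \<le> b n" "(\<Sum>n\<in>UNIV. s n) = v"
    using sum_attains_between[OF le v(1)] by blast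
  have "admissible_split ylo yhi (P 1 n) (P 0 n) (SN n) (s n)" for n
    using admissible_split_between[OF lower upper] s(1) by blast
  from admissible_split_realizable[OF standing this] show ?thesis
    using v s sum_mono[of UNIV a s] sum_mono[of UNIV s b] by auto
qed

end

theorem proposition7:
  fixes M :: "'a measure" and X Y :: "'a \<Rightarrow> real" and N :: "'a \<Rightarrow> 'n::finite"
    and Ylo Yhi :: real
  assumes "standing M X Y N Ylo Yhi"
  shows "(deltaB M X Y N \<ge> 0 \<longrightarrow> D M X Y \<in> {DNM M X Y N .. DMOBp M X Y N Ylo Yhi})
       \<and> (deltaB M X Y N \<le> 0 \<longrightarrow> D M X Y \<in> {DMOBm M X Y N Ylo Yhi .. DNM M X Y N})
       \<and> (\<forall>d \<in> {DNM M X Y N .. DMOBp M X Y N Ylo Yhi}.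
            \<exists>M' :: (real \<times> real \<times> 'n) measure.
              standing M' fst (fst \<circ> snd) (snd \<circ> snd) Ylo Yhi
              \<and> same_obs M X Y N M' fst (fst \<circ> snd) (snd \<circ> snd)
              \<and> deltaB M' fst (fst \<circ> snd) (snd \<circ> snd) \<ge> 0
              \<and> D M' fst (fst \<circ> snd) = d)
       \<and> (\<forall>d \<in> {DMOBm M X Y N Ylo Yhi .. DNM M X Y N}.
            \<exists>M' :: (real \<times> real \<times> 'n) measure.
              standing M' fst (fst \<circ> snd) (snd \<circ> snd) Ylo Yhi
              \<and> same_obs M X Y N M' fst (fst \<circ> snd) (snd \<circ> snd)
              \<and> deltaB M' fst (fst \<circ> snd) (snd \<circ> snd) \<le> 0
              \<and> D M' fst (fst \<circ> snd) = d)"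
proof -
  interpret binary_triple M X Y N
    using assms unfolding standing_def binary_triple_def binary_triple_axioms_def by auto
  note mean = mean_X_strictly_between[OF assms]
  note admissible = admissible_splits[OF assms]
  have "S_uncorr n \<le> split_max Ylo Yhi (P 1 n) (P 0 n) (SN n)"
    "SN n - split_max Ylo Yhi (P 0 n) (P 1 n) (SN n) \<le> S_uncorr n" for n
    using admissible(2) by (auto simp: admissible_split_iff)
  note attains_upper = D_attains_between[OF assms admissible(2) admissible(3) this(1)]
    and attains_lower = D_attains_between[OF assms admissible(4) admissible(2) this(2)]
  show ?thesis
    using D_bounds[OF assms] attains_upper attains_lower
    unfolding DNM_eq_ols_slope[OF mean] DMOBp_eq_ols_slope DMOBm_eq_ols_slope
    by fastforce
qed

end
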